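(* Let $\mathcal{H}$ be a complex infinite-dimensional Hilbert space, let $n>1$ be an integer, and let $A\in B(\mathcal{H})$ be $n$-normal, i.e. $A^*A^n=A^nA^*$ (equivalently, $A^n$ is a normal operator). Then $A$ is polaroid.
   Context: $B(\mathcal{H})$ denotes the algebra of bounded linear operators on $\mathcal{H}$. For $S\in B(\mathcal{H})$ and $\lambda\in\mathbb{C}$, the ascent $\mathrm{asc}(S-\lambda)$ is the least nonnegative integer $p$ with $(S-\lambda)^{-p}(0)=(S-\lambda)^{-(p+1)}(0)$, and the descent $\mathrm{dsc}(S-\lambda)$ is the least nonnegative integer $p$ with $(S-\lambda)^p(\mathcal{H})=(S-\lambda)^{p+1}(\mathcal{H})$. A point $\lambda$ that is isolated in $\sigma(S)$ is a pole (of the resolvent) of $S$ if $0<\mathrm{asc}(S-\lambda)=\mathrm{dsc}(S-\lambda)<\infty$. $S$ is polaroid if every isolated point of $\sigma(S)$ is a pole of $S$. *)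

theory Defs
  imports "HOL-Analysis.Analysis"
begin

class scaleC =
  fixes scaleC :: "complex \<Rightarrow> 'a \<Rightarrow> 'a"  (infixr \<open>*\<^sub>C\<close> 75)

class complex_inner_space = real_normed_vector + scaleC +
  fixes cinner :: "'a \<Rightarrow> 'a \<Rightarrow> complex"
  assumes scaleC_add_right: "a *\<^sub>C (x + y) = a *\<^sub>C x + a *\<^sub>C y"
    and scaleC_add_left: "(a + b) *\<^sub>C x = a *\<^sub>C x + b *\<^sub>C x"
    and scaleC_scaleC: "a *\<^sub>C (b *\<^sub>C x) = (a * b) *\<^sub>C x"
    and scaleC_one: "1 *\<^sub>C x = x"
    and scaleR_scaleC: "scaleR r x = complex_of_real r *\<^sub>C x"
    and cinner_commute: "cinner x y = cnj (cinner y x)"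
    and cinner_add_left: "cinner (x + y) z = cinner x z + cinner y z"
    and cinner_scaleC_left: "cinner (a *\<^sub>C x) y = cnj a * cinner x y"
    and cinner_self_real: "Im (cinner x x) = 0"
    and cinner_self_nonneg: "0 \<le> Re (cinner x x)"
    and cinner_self_eq_zero: "cinner x x = 0 \<longleftrightarrow> x = 0"
    and norm_eq_sqrt_cinner: "norm x = sqrt (Re (cinner x x))"

class complex_hilbert_space = complex_inner_space + complete_space

definition infinite_dimensional :: "'a::complex_inner_space itself \<Rightarrow> bool" where
  "infinite_dimensional (_::'a itself) \<longleftrightarrow>
     \<not> (\<exists>S::'a set. finite S \<and> (\<forall>x. \<exists>c. x = (\<Sum>s\<in>S. c s *\<^sub>C s)))"

definition bounded_clinear :: "('a::complex_inner_space \<Rightarrow> 'b::complex_inner_space) \<Rightarrow> bool" where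
  "bounded_clinear T \<longleftrightarrow>
     (\<forall>x y. T (x + y) = T x + T y) \<and> (\<forall>a x. T (a *\<^sub>C x) = a *\<^sub>C T x) \<and>
     (\<exists>K. \<forall>x. norm (T x) \<le> norm x * K)"

definition shiftop :: "('a::complex_inner_space \<Rightarrow> 'a) \<Rightarrow> complex \<Rightarrow> 'a \<Rightarrow> 'a" where
  "shiftop S mu = (\<lambda>x. S x - mu *\<^sub>C x)"

definition spectrum :: "('a::complex_inner_space \<Rightarrow> 'a) \<Rightarrow> complex set" where
  "spectrum S = {mu. \<not> (\<exists>B. bounded_clinear B \<and> (\<forall>x. B (shiftop S mu x) = x)
                                           \<and> (\<forall>x. shiftop S mu (B x) = x))}"

definition ascent :: "('a::complex_inner_space \<Rightarrow> 'a) \<Rightarrow> enat" where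
  "ascent T = (if \<exists>p. {x. (T ^^ p) x = 0} = {x. (T ^^ Suc p) x = 0}
               then enat (LEAST p. {x. (T ^^ p) x = 0} = {x. (T ^^ Suc p) x = 0})
               else \<infinity>)"

definition descent :: "('a::complex_inner_space \<Rightarrow> 'a) \<Rightarrow> enat" where
  "descent T = (if \<exists>p. range (T ^^ p) = range (T ^^ Suc p)
               then enat (LEAST p. range (T ^^ p) = range (T ^^ Suc p))
               else \<infinity>)"

definition is_pole :: "('a::complex_inner_space \<Rightarrow> 'a) \<Rightarrow> complex \<Rightarrow> bool" where
  "is_pole S mu \<longleftrightarrow> mu isolated_in spectrum S \<and>
     0 < ascent (shiftop S mu) \<and> ascent (shiftop S mu) = descent (shiftop S mu) \<and>
     ascent (shiftop S mu) < \<infinity>"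

definition polaroid :: "('a::complex_inner_space \<Rightarrow> 'a) \<Rightarrow> bool" where
  "polaroid S \<longleftrightarrow> (\<forall>mu. mu isolated_in spectrum S \<longrightarrow> is_pole S mu)"

end

theory Submission
  imports Defs "HOL-Complex_Analysis.Complex_Analysis"
begin

text \<open>Let \<open>lam\<close> be isolated in the spectrum of \<open>A\<close>, with resolvent \<open>R(z) = (A - z)\<^sup>-\<^sup>1\<close>
  on a punctured disc around \<open>lam\<close>. Contour integrals of \<open>f(z) R(z)\<close> over small circles give
  the Riesz projection \<open>P\<close>, the functional calculus \<open>f(A) P\<close> for polynomials \<open>f\<close>, and a
  reduced resolvent \<open>S\<close> with \<open>(A - lam) S = S (A - lam) = 1 - P\<close>. Hence \<open>lam\<close> is a pole as
  soon as \<open>(A - lam)\<^sup>m P = 0\<close> for some \<open>m\<close>.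

  Put \<open>Q = A\<^sup>n - lam\<^sup>n\<close>; it is normal, so \<open>\<parallel>Q u\<parallel>\<^sup>2 \<le> \<parallel>Q\<^sup>2 u\<parallel> \<parallel>u\<parallel>\<close> and
  \<open>k \<mapsto> \<parallel>Q\<^sup>k P w\<parallel>\<close> is log-convex. Shrinking the contour, where
  \<open>|z\<^sup>n - lam\<^sup>n| = O(|z - lam|)\<close>, shows that this sequence decays faster than any geometric
  sequence, which forces \<open>Q P = 0\<close>. For \<open>lam = 0\<close> this is \<open>A\<^sup>n P = 0\<close>. Otherwise
  \<open>z\<^sup>n - lam\<^sup>n = (z - lam) q(z)\<close> with \<open>q(lam) \<noteq> 0\<close>, and inverting \<open>q\<close> near \<open>lam\<close> by a
  geometric series gives \<open>(A - lam) P = 0\<close>.\<close>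

section \<open>Complex inner product spaces\<close>

declare scaleC_one [simp] scaleC_scaleC [simp]

lemma scaleC_zero_left [simp]: "0 *\<^sub>C (x::'a::complex_inner_space) = 0"
  using scaleC_add_left[of 0 0 x] by simp

lemma scaleC_zero_right [simp]: "a *\<^sub>C (0::'a::complex_inner_space) = 0"
  using scaleC_add_right[of a 0 0] by simp

lemma scaleC_minus_left: "(- a) *\<^sub>C (x::'a::complex_inner_space) = - (a *\<^sub>C x)"
  using scaleC_add_left[of a "- a" x] by (auto simp: add_eq_0_iff)

lemma scaleC_minus_right: "a *\<^sub>C (- x::'a::complex_inner_space) = - (a *\<^sub>C x)"
  using scaleC_add_right[of a x "- x"] by (auto simp: add_eq_0_iff)

lemma scaleC_diff_left: "(a - b) *\<^sub>C (x::'a::complex_inner_space) = a *\<^sub>C x - b *\<^sub>C x"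
  using scaleC_add_left[of a "- b" x] by (simp add: scaleC_minus_left)

lemma scaleC_diff_right: "a *\<^sub>C ((x::'a::complex_inner_space) - y) = a *\<^sub>C x - a *\<^sub>C y"
  using scaleC_add_right[of a x "- y"] by (simp add: scaleC_minus_right)

lemma cinner_zero_left [simp]: "cinner 0 (y::'a::complex_inner_space) = 0"
  using cinner_add_left[of 0 0 y] by simp

lemma cinner_add_right: "cinner (x::'a::complex_inner_space) (y + z) = cinner x y + cinner x z"
  by (metis cinner_add_left cinner_commute complex_cnj_add)

lemma cinner_zero_right [simp]: "cinner (x::'a::complex_inner_space) 0 = 0"
  using cinner_add_right[of x 0 0] by simp

lemma cinner_scaleC_right: "cinner (x::'a::complex_inner_space) (a *\<^sub>C y) = a * cinner x y"
  by (metis cinner_commute cinner_scaleC_left complex_cnj_cnj complex_cnj_mult)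

lemma cinner_diff_left: "cinner ((x::'a::complex_inner_space) - y) z = cinner x z - cinner y z"
  using cinner_add_left[of x "- y" z] cinner_scaleC_left[of "- 1" y z]
  by (simp add: scaleC_minus_left)

lemma cinner_diff_right: "cinner (x::'a::complex_inner_space) (y - z) = cinner x y - cinner x z"
  using cinner_add_right[of x y "- z"] cinner_scaleC_right[of x "- 1" z]
  by (simp add: scaleC_minus_left)

lemma cinner_self_eq_norm_square: "cinner (x::'a::complex_inner_space) x = complex_of_real ((norm x)\<^sup>2)"
  using norm_eq_sqrt_cinner[of x] cinner_self_nonneg[of x] cinner_self_real[of x]
  by (simp add: complex_eq_iff)

lemma norm_cinner_self: "norm (cinner (x::'a::complex_inner_space) x) = (norm x)\<^sup>2"
  by (simp add: cinner_self_eq_norm_square norm_power)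

lemma norm_cinner_le: "norm (cinner (x::'a::complex_inner_space) y) \<le> norm x * norm y"
proof (cases "x = 0")
  case False
  define d where "d = (norm x)\<^sup>2"
  define c where "c = cinner x y"
  define t where "t = c / complex_of_real d"
  have d: "d > 0" using False by (simp add: d_def)
  \<comment> \<open>project \<open>y\<close> orthogonally onto the line through \<open>x\<close>\<close>
  have "cinner (y - t *\<^sub>C x) (y - t *\<^sub>C x)
      = cinner y y - t * cinner y x - cnj t * cinner x y + cnj t * t * cinner x x"
    by (simp add: cinner_diff_left cinner_diff_right cinner_scaleC_left cinner_scaleC_right
        algebra_simps)
  also have "\<dots> = cinner y y - c * cnj c / complex_of_real d"
    using d cinner_commute[of y x]
    by (simp add: t_def c_def d_def cinner_self_eq_norm_square field_simps)
  also have "c * cnj c = complex_of_real ((cmod c)\<^sup>2)"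
    by (simp add: complex_norm_square[symmetric])
  also have "cinner y y = complex_of_real ((norm y)\<^sup>2)"
    by (rule cinner_self_eq_norm_square)
  finally have "0 \<le> (norm y)\<^sup>2 - (cmod c)\<^sup>2 / d"
    using cinner_self_nonneg[of "y - t *\<^sub>C x"] by simp
  then have "(cmod c)\<^sup>2 \<le> (norm x * norm y)\<^sup>2"
    using d by (simp add: pos_divide_le_eq power_mult_distrib d_def mult.commute)
  then show ?thesis unfolding c_def by (rule power2_le_imp_le) simp
qed simp

lemma cinner_eqI: "(\<And>y. cinner y u = cinner y v) \<Longrightarrow> u = (v::'a::complex_inner_space)"
  by (metis cinner_diff_right cinner_self_eq_zero eq_iff_diff_eq_0)

lemma norm_scaleC: "norm (a *\<^sub>C (x::'a::complex_inner_space)) = cmod a * norm x"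
proof -
  have "cinner (a *\<^sub>C x) (a *\<^sub>C x) = (cnj a * a) * cinner x x"
    by (simp add: cinner_scaleC_left cinner_scaleC_right mult.assoc)
  also have "cnj a * a = complex_of_real ((cmod a)\<^sup>2)"
    by (simp add: complex_norm_square[symmetric] mult.commute)
  finally have "complex_of_real ((norm (a *\<^sub>C x))\<^sup>2) = complex_of_real ((cmod a * norm x)\<^sup>2)"
    by (simp add: cinner_self_eq_norm_square power_mult_distrib)
  then have "(norm (a *\<^sub>C x))\<^sup>2 = (cmod a * norm x)\<^sup>2"
    using of_real_eq_iff by blast
  then show ?thesis by (simp add: power2_eq_iff_nonneg)
qed

lemma bounded_linear_cinner_right: "bounded_linear (cinner (y::'a::complex_inner_space))"
  by (rule bounded_linear_intro[where K = "norm y"])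
    (auto simp: cinner_add_right scaleR_scaleC cinner_scaleC_right scaleR_conv_of_real,
      metis norm_cinner_le mult.commute)

lemma bounded_bilinear_scaleC: "bounded_bilinear (scaleC :: complex \<Rightarrow> 'a::complex_inner_space \<Rightarrow> 'a)"
  by standard (auto simp: scaleC_add_left scaleC_add_right scaleR_scaleC scaleR_conv_of_real
      norm_scaleC mult.commute intro: exI[of _ 1])

lemma continuous_on_scaleC [continuous_intros]:
  fixes g :: "'b::topological_space \<Rightarrow> 'a::complex_inner_space"
  shows "continuous_on S f \<Longrightarrow> continuous_on S g \<Longrightarrow> continuous_on S (\<lambda>x. f x *\<^sub>C g x)"
  using bounded_bilinear.continuous_on[OF bounded_bilinear_scaleC] by blast

section \<open>Bounded complex-linear operators\<close>

lemma bounded_clinear_iff: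
  "bounded_clinear T \<longleftrightarrow> bounded_linear T \<and> (\<forall>a x. T (a *\<^sub>C x) = a *\<^sub>C T x)"
proof
  assume T: "bounded_clinear T"
  then obtain K where "\<And>x. norm (T x) \<le> norm x * K" by (auto simp: bounded_clinear_def)
  with T show "bounded_linear T \<and> (\<forall>a x. T (a *\<^sub>C x) = a *\<^sub>C T x)"
    by (auto simp: bounded_clinear_def scaleR_scaleC intro!: bounded_linear_intro)
qed (auto simp: bounded_clinear_def linear_simps intro: bounded_linear.bounded)

lemma bounded_clinear_imp_bounded_linear: "bounded_clinear T \<Longrightarrow> bounded_linear T"
  by (simp add: bounded_clinear_iff)

lemma bounded_clinear_add: "bounded_clinear T \<Longrightarrow> T (x + y) = T x + T y"
  by (simp add: bounded_clinear_def)

lemma bounded_clinear_scaleC: "bounded_clinear T \<Longrightarrow> T (a *\<^sub>C x) = a *\<^sub>C T x"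
  by (simp add: bounded_clinear_def)

lemma bounded_clinear_zero: "bounded_clinear T \<Longrightarrow> T 0 = 0"
  by (simp add: bounded_clinear_iff linear_simps)

lemma bounded_clinear_minus: "bounded_clinear T \<Longrightarrow> T (- x) = - T x"
  by (simp add: bounded_clinear_iff linear_simps)

lemma bounded_clinear_diff: "bounded_clinear T \<Longrightarrow> T (x - y) = T x - T y"
  by (simp add: bounded_clinear_iff linear_simps)

lemma bounded_clinear_pos_bound: "bounded_clinear T \<Longrightarrow> \<exists>K>0. \<forall>x. norm (T x) \<le> K * norm x"
  by (metis bounded_clinear_imp_bounded_linear bounded_linear.pos_bounded mult.commute)

lemma bounded_clinear_compose:
  "bounded_clinear S \<Longrightarrow> bounded_clinear T \<Longrightarrow> bounded_clinear (\<lambda>x. S (T x))"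
  by (simp add: bounded_clinear_iff bounded_linear_compose)

lemma bounded_clinear_sub:
  "bounded_clinear S \<Longrightarrow> bounded_clinear T \<Longrightarrow> bounded_clinear (\<lambda>x. S x - T x)"
  by (simp add: bounded_clinear_iff bounded_linear_sub scaleC_diff_right)

lemma bounded_clinear_scaleC_const: "bounded_clinear (\<lambda>x. c *\<^sub>C x)"
  by (simp add: bounded_clinear_iff bounded_bilinear.bounded_linear_right[OF bounded_bilinear_scaleC]
      mult.commute)

lemma bounded_clinear_shiftop: "bounded_clinear S \<Longrightarrow> bounded_clinear (shiftop S c)"
  unfolding shiftop_def by (intro bounded_clinear_sub bounded_clinear_scaleC_const)

lemma bounded_clinear_funpow:
  fixes T :: "'a::complex_inner_space \<Rightarrow> 'a"
  shows "bounded_clinear T \<Longrightarrow> bounded_clinear (T ^^ k)"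
  by (induction k) (simp_all add: bounded_clinear_iff bounded_linear_compose bounded_linear_ident
      id_def comp_def)

lemma compact_uniform_bound:
  fixes F :: "'b::metric_space \<Rightarrow> 'c::real_normed_vector \<Rightarrow> 'd::real_normed_vector"
  assumes S: "compact S"
    and local: "\<And>z. z \<in> S \<Longrightarrow> \<exists>K d. d > 0 \<and> (\<forall>z'\<in>ball z d. \<forall>x. norm (F z' x) \<le> K * norm x)"
  shows "\<exists>M\<ge>0. \<forall>z\<in>S. \<forall>x. norm (F z x) \<le> M * norm x"
proof -
  obtain K d where Kd: "\<And>z. z \<in> S \<Longrightarrow> d z > 0 \<and> (\<forall>z'\<in>ball z (d z). \<forall>x. norm (F z' x) \<le> K z * norm x)"
    using local by metis
  then have "S \<subseteq> (\<Union>c\<in>S. ball c (d c))" by force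
  then obtain C where C: "C \<subseteq> S" "finite C" "S \<subseteq> (\<Union>c\<in>C. ball c (d c))"
    using compactE_image[OF S, of S "\<lambda>c. ball c (d c)"] by blast
  define M where "M = (\<Sum>c\<in>C. max 0 (K c))"
  have "norm (F z x) \<le> M * norm x" if z: "z \<in> S" for z x
  proof -
    obtain c where c: "c \<in> C" "z \<in> ball c (d c)" using C(3) z by auto
    then have "norm (F z x) \<le> K c * norm x" using Kd[of c] C(1) by auto
    also have "\<dots> \<le> max 0 (K c) * norm x" by (simp add: mult_right_mono)
    also have "max 0 (K c) \<le> M"
      unfolding M_def using member_le_sum[of c C "\<lambda>c. max 0 (K c)"] C(2) c(1) by simp
    then have "max 0 (K c) * norm x \<le> M * norm x" by (rule mult_right_mono) simp
    finally show ?thesis .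
  qed
  moreover have "M \<ge> 0" unfolding M_def by (intro sum_nonneg) auto
  ultimately show ?thesis by blast
qed

section \<open>Vector-valued circle integrals\<close>

subclass (in complex_hilbert_space) banach ..

text \<open>\<open>circle_integral z r g\<close> is \<open>(2\<pi>i)\<^sup>-\<^sup>1 \<ointegral> g\<close> over \<open>circlepath z r\<close>: the factor
  \<open>circlepath z r t - z\<close> is \<open>(2\<pi>i)\<^sup>-\<^sup>1\<close> times the derivative of the path.\<close>
definition circle_integral :: "complex \<Rightarrow> real \<Rightarrow> (complex \<Rightarrow> 'a::complex_hilbert_space) \<Rightarrow> 'a" where
  "circle_integral z r g = integral {0..1} (\<lambda>t. (circlepath z r t - z) *\<^sub>C g (circlepath z r t))"

lemma circlepath_in_sphere: "r > 0 \<Longrightarrow> circlepath z r t \<in> sphere z r"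
  by (simp add: circlepath dist_norm norm_mult)

lemma continuous_on_circle_integrand:
  fixes g :: "complex \<Rightarrow> 'a::complex_hilbert_space"
  assumes r: "r > 0" and g: "continuous_on (sphere z r) g"
  shows "continuous_on {0..1} (\<lambda>t. (circlepath z r t - z) *\<^sub>C g (circlepath z r t))"
proof -
  have c: "continuous_on {0..1} (circlepath z r)"
    using path_circlepath unfolding path_def .
  have "continuous_on {0..1} (\<lambda>t. g (circlepath z r t))"
    by (rule continuous_on_compose2[OF g c]) (use circlepath_in_sphere[OF r] in auto)
  with c show ?thesis by (intro continuous_intros)
qed

lemma has_contour_integral_cinner_circle_integral:
  fixes g :: "complex \<Rightarrow> 'a::complex_hilbert_space"
  assumes r: "r > 0" and g: "continuous_on (sphere z r) g"
  shows "((\<lambda>w. cinner y (g w)) has_contour_integral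
           (2 * of_real pi * \<i> * cinner y (circle_integral z r g))) (circlepath z r)"
proof -
  define h where "h = (\<lambda>t. (circlepath z r t - z) *\<^sub>C g (circlepath z r t))"
  have "h integrable_on {0..1}"
    unfolding h_def by (rule integrable_continuous_interval[OF continuous_on_circle_integrand[OF r g]])
  then have "((\<lambda>t. cinner y (h t)) has_integral cinner y (circle_integral z r g)) {0..1}"
    unfolding circle_integral_def h_def[symmetric]
    using has_integral_linear[OF integrable_integral bounded_linear_cinner_right] by (simp add: comp_def)
  then have "((\<lambda>t. (2 * of_real pi * \<i>) * cinner y (h t))
               has_integral (2 * of_real pi * \<i> * cinner y (circle_integral z r g))) {0..1}"
    by (rule has_integral_mult_right)
  moreover have "circlepath z r t - z = r * exp (2 * of_real pi * \<i> * of_real t)" for t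
    by (simp add: circlepath)
  ultimately show ?thesis unfolding has_contour_integral_def
    by (auto simp: vector_derivative_circlepath01 h_def cinner_scaleC_right
        elim!: has_integral_eq[rotated])
qed

lemma circle_integral_eqI:
  fixes g :: "complex \<Rightarrow> 'a::complex_hilbert_space"
  assumes r: "r > 0" and g: "continuous_on (sphere z r) g"
    and v: "\<And>y. ((\<lambda>w. cinner y (g w))
              has_contour_integral (2 * of_real pi * \<i> * cinner y v)) (circlepath z r)"
  shows "circle_integral z r g = v"
proof (rule cinner_eqI)
  show "cinner y (circle_integral z r g) = cinner y v" for y
    using has_contour_integral_unique[OF has_contour_integral_cinner_circle_integral[OF r g] v] by simp
qed

lemma circle_integral_cong:
  assumes r: "r > 0" and eq: "\<And>w. w \<in> sphere z r \<Longrightarrow> f w = g w"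
  shows "circle_integral z r f = circle_integral z r g"
  unfolding circle_integral_def by (rule integral_cong) (metis eq circlepath_in_sphere[OF r])

lemma circle_integral_add:
  fixes g1 g2 :: "complex \<Rightarrow> 'a::complex_hilbert_space"
  assumes r: "r > 0" and g1: "continuous_on (sphere z r) g1" and g2: "continuous_on (sphere z r) g2"
  shows "circle_integral z r (\<lambda>w. g1 w + g2 w) = circle_integral z r g1 + circle_integral z r g2"
  using g1 g2 has_contour_integral_add[OF has_contour_integral_cinner_circle_integral[OF r g1]
      has_contour_integral_cinner_circle_integral[OF r g2]]
  by (intro circle_integral_eqI[OF r])
    (auto intro: continuous_intros simp: cinner_add_right algebra_simps)

lemma circle_integral_scaleC:
  fixes g :: "complex \<Rightarrow> 'a::complex_hilbert_space"
  assumes r: "r > 0" and g: "continuous_on (sphere z r) g"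
  shows "circle_integral z r (\<lambda>w. c *\<^sub>C g w) = c *\<^sub>C circle_integral z r g"
  using g has_contour_integral_lmul[OF has_contour_integral_cinner_circle_integral[OF r g], of c]
  by (intro circle_integral_eqI[OF r])
    (auto intro: continuous_intros simp: cinner_scaleC_right algebra_simps)

lemma circle_integral_scalar_function:
  fixes x :: "'a::complex_hilbert_space"
  assumes r: "r > 0" and f: "continuous_on (sphere z r) f"
    and i: "(f has_contour_integral i) (circlepath z r)"
  shows "circle_integral z r (\<lambda>w. f w *\<^sub>C x) = (i / (2 * of_real pi * \<i>)) *\<^sub>C x"
  using f has_contour_integral_rmul[OF i]
  by (intro circle_integral_eqI[OF r]) (auto intro: continuous_intros simp: cinner_scaleC_right)

lemma bounded_clinear_circle_integral:
  fixes g :: "complex \<Rightarrow> 'a::complex_hilbert_space"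
  assumes r: "r > 0" and g: "continuous_on (sphere z r) g" and L: "bounded_clinear L"
  shows "L (circle_integral z r g) = circle_integral z r (\<lambda>w. L (g w))"
proof -
  define h where "h = (\<lambda>t. (circlepath z r t - z) *\<^sub>C g (circlepath z r t))"
  have "h integrable_on {0..1}"
    unfolding h_def by (rule integrable_continuous_interval[OF continuous_on_circle_integrand[OF r g]])
  then have "integral {0..1} (L \<circ> h) = L (integral {0..1} h)"
    by (rule integral_linear[OF _ bounded_clinear_imp_bounded_linear[OF L]])
  then show ?thesis
    by (simp add: circle_integral_def h_def comp_def bounded_clinear_scaleC[OF L])
qed

lemma norm_circle_integral_le:
  fixes g :: "complex \<Rightarrow> 'a::complex_hilbert_space"
  assumes r: "r > 0" and g: "continuous_on (sphere z r) g"
    and B: "\<And>w. w \<in> sphere z r \<Longrightarrow> norm (g w) \<le> B"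
  shows "norm (circle_integral z r g) \<le> r * B"
proof -
  have "norm (integral {0..1} (\<lambda>t. (circlepath z r t - z) *\<^sub>C g (circlepath z r t)))
      \<le> (r * B) * (1 - 0)"
  proof (rule integral_bound)
    fix t :: real
    have "norm ((circlepath z r t - z) *\<^sub>C g (circlepath z r t)) = r * norm (g (circlepath z r t))"
      using r by (simp add: norm_scaleC circlepath norm_mult)
    also have "\<dots> \<le> r * B" using r B[OF circlepath_in_sphere[OF r]] by (simp add: mult_left_mono)
    finally show "norm ((circlepath z r t - z) *\<^sub>C g (circlepath z r t)) \<le> r * B" .
  qed (simp_all add: continuous_on_circle_integrand[OF r g])
  then show ?thesis by (simp add: circle_integral_def)
qed

lemma bounded_clinear_circle_integral_family:
  fixes L :: "complex \<Rightarrow> 'a::complex_hilbert_space \<Rightarrow> 'a"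
  assumes r: "r > 0" and L: "\<And>w. w \<in> sphere z r \<Longrightarrow> bounded_clinear (L w)"
    and cont: "\<And>x. continuous_on (sphere z r) (\<lambda>w. L w x)"
    and bound: "\<And>w x. w \<in> sphere z r \<Longrightarrow> norm (L w x) \<le> M * norm x"
  shows "bounded_clinear (\<lambda>x. circle_integral z r (\<lambda>w. L w x))"
  unfolding bounded_clinear_def
proof (intro conjI allI exI)
  show "circle_integral z r (\<lambda>w. L w (x + y))
      = circle_integral z r (\<lambda>w. L w x) + circle_integral z r (\<lambda>w. L w y)" for x y
    by (subst circle_integral_cong[OF r, where g = "\<lambda>w. L w x + L w y"])
      (simp_all add: bounded_clinear_add[OF L] circle_integral_add[OF r cont cont])
  show "circle_integral z r (\<lambda>w. L w (a *\<^sub>C x)) = a *\<^sub>C circle_integral z r (\<lambda>w. L w x)" for a x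
    by (subst circle_integral_cong[OF r, where g = "\<lambda>w. a *\<^sub>C L w x"])
      (simp_all add: bounded_clinear_scaleC[OF L] circle_integral_scaleC[OF r cont])
  show "norm (circle_integral z r (\<lambda>w. L w x)) \<le> norm x * (r * M)" for x
    using norm_circle_integral_le[OF r cont bound] by (simp add: algebra_simps)
qed

section \<open>Polynomial functions\<close>

inductive complex_polynomial :: "(complex \<Rightarrow> complex) \<Rightarrow> bool" where
  complex_polynomial_const: "complex_polynomial (\<lambda>z. c)"
| complex_polynomial_ident: "complex_polynomial (\<lambda>z. z)"
| complex_polynomial_add:
    "complex_polynomial f \<Longrightarrow> complex_polynomial g \<Longrightarrow> complex_polynomial (\<lambda>z. f z + g z)"
| complex_polynomial_mult:
    "complex_polynomial f \<Longrightarrow> complex_polynomial g \<Longrightarrow> complex_polynomial (\<lambda>z. f z * g z)"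

lemma complex_polynomial_holomorphic: "complex_polynomial f \<Longrightarrow> f holomorphic_on S"
  by (induction rule: complex_polynomial.induct) (auto intro!: holomorphic_intros)

lemma complex_polynomial_continuous_on: "complex_polynomial f \<Longrightarrow> continuous_on S f"
  using complex_polynomial_holomorphic holomorphic_on_imp_continuous_on by blast

lemma complex_polynomial_has_contour_integral_circlepath:
  "complex_polynomial f \<Longrightarrow> (f has_contour_integral 0) (circlepath z r)"
  by (rule Cauchy_theorem_convex_simple[OF complex_polynomial_holomorphic convex_UNIV]) auto

lemma complex_polynomial_cmult: "complex_polynomial f \<Longrightarrow> complex_polynomial (\<lambda>z. c * f z)"
  by (rule complex_polynomial_mult[OF complex_polynomial_const])

lemma complex_polynomial_diff:
  "complex_polynomial f \<Longrightarrow> complex_polynomial g \<Longrightarrow> complex_polynomial (\<lambda>z. f z - g z)"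
  using complex_polynomial_add[of f "\<lambda>z. (- 1) * g z"] complex_polynomial_cmult[of g "- 1"] by simp

lemma complex_polynomial_power: "complex_polynomial f \<Longrightarrow> complex_polynomial (\<lambda>z. f z ^ k)"
  by (induction k) (auto intro: complex_polynomial_const complex_polynomial_mult)

lemma complex_polynomial_sum:
  "(\<And>i. complex_polynomial (f i)) \<Longrightarrow> complex_polynomial (\<lambda>z. \<Sum>i<(k::nat). f i z)"
  by (induction k) (auto intro: complex_polynomial_const complex_polynomial_add)

lemma complex_polynomial_small_near_root:
  assumes v: "complex_polynomial v" and v0: "v a = 0" and rho: "rho > 0"
  obtains r where "0 < r" "r < rho" "\<And>z. z \<in> sphere a r \<Longrightarrow> cmod (v z) \<le> 1/2"
proof -
  have "continuous (at a) v"
    using complex_polynomial_continuous_on[OF v, of UNIV] by (simp add: continuous_on_eq_continuous_at)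
  then obtain d where d: "d > 0" "\<And>z. dist z a < d \<Longrightarrow> dist (v z) (v a) < 1/2"
    unfolding continuous_at_eps_delta by (metis divide_pos_pos zero_less_numeral zero_less_one)
  define r where "r = min (rho/2) (d/2)"
  have "0 < r" "r < rho" using rho d by (auto simp: r_def)
  moreover have "cmod (v z) \<le> 1/2" if "z \<in> sphere a r" for z
  proof -
    have "dist z a < d" using that d rho by (simp add: r_def dist_commute)
    then show ?thesis using d(2)[of z] v0 by (simp add: dist_norm)
  qed
  ultimately show ?thesis by (rule that)
qed

lemma norm_power_diff_le:
  fixes lam :: complex
  shows "\<exists>C\<ge>0. \<forall>z. cmod (z - lam) \<le> 1 \<longrightarrow> cmod (z ^ n - lam ^ n) \<le> C * cmod (z - lam)"
proof (cases n)
  case (Suc m)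
  define C where "C = (\<Sum>p<Suc m. (cmod lam + 1) ^ p * (cmod lam + 1) ^ (m - p))"
  have "cmod (z ^ n - lam ^ n) \<le> C * cmod (z - lam)" if z: "cmod (z - lam) \<le> 1" for z
  proof -
    have zb: "cmod z \<le> cmod lam + 1"
      using norm_triangle_ineq2[of z lam] z by simp
    have "cmod (\<Sum>p<Suc m. z ^ p * lam ^ (m - p)) \<le> (\<Sum>p<Suc m. cmod (z ^ p * lam ^ (m - p)))"
      by (rule norm_sum)
    also have "\<dots> \<le> C" unfolding C_def norm_mult norm_power
      by (intro sum_mono mult_mono power_mono zb) auto
    finally have "cmod (z - lam) * cmod (\<Sum>p<Suc m. z ^ p * lam ^ (m - p)) \<le> cmod (z - lam) * C"
      by (rule mult_left_mono) simp
    then show ?thesis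
      unfolding Suc diff_power_eq_sum norm_mult by (simp add: mult.commute)
  qed
  moreover have "C \<ge> 0" unfolding C_def by (intro sum_nonneg) auto
  ultimately show ?thesis by blast
qed auto

text \<open>Write \<open>z\<^sup>n - lam\<^sup>n = (z - lam) q(z)\<close>, where \<open>q(lam) = n lam\<^sup>n\<^sup>-\<^sup>1 \<noteq> 0\<close>. With
  \<open>v = 1 - q/q(lam)\<close>, the geometric sum \<open>p\<^sub>k = (1 + v + \<dots> + v\<^sup>k\<^sup>-\<^sup>1)/q(lam)\<close> inverts \<open>q\<close> up to \<open>v\<^sup>k\<close>.\<close>
lemma power_diff_geometric_factor:
  fixes lam :: complex
  assumes lam: "lam \<noteq> 0" and n: "n > 0"
  obtains v p where "complex_polynomial v" "v lam = 0" "\<And>k. complex_polynomial (p k)"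
    "\<And>k z. p k z * (z ^ n - lam ^ n) = (z - lam) * (1 - v z ^ k)"
proof -
  obtain m where m: "n = Suc m" using n by (cases n) auto
  define q where "q z = (\<Sum>i<Suc m. z ^ i * lam ^ (m - i))" for z
  have q_factor: "z ^ n - lam ^ n = (z - lam) * q z" for z
    unfolding m q_def by (rule diff_power_eq_sum)
  have "q lam = (\<Sum>i<Suc m. lam ^ m)"
    unfolding q_def by (intro sum.cong refl) (simp add: power_add[symmetric])
  then have "q lam = of_nat n * lam ^ m" by (simp add: m)
  then have q_lam: "q lam \<noteq> 0" using lam n by simp
  define v where "v z = 1 - inverse (q lam) * q z" for z
  define p where "p k z = inverse (q lam) * (\<Sum>i<k. v z ^ i)" for k z
  have "complex_polynomial q"
    unfolding q_def[abs_def]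
    by (intro complex_polynomial_sum complex_polynomial_mult complex_polynomial_power
        complex_polynomial_ident complex_polynomial_const)
  then have v_poly: "complex_polynomial v"
    unfolding v_def[abs_def]
    by (intro complex_polynomial_diff complex_polynomial_cmult complex_polynomial_const)
  then have p_poly: "complex_polynomial (p k)" for k
    unfolding p_def[abs_def]
    by (intro complex_polynomial_cmult complex_polynomial_sum complex_polynomial_power)
  have p_factor: "p k z * (z ^ n - lam ^ n) = (z - lam) * (1 - v z ^ k)" for k z
  proof -
    have "1 - v z = inverse (q lam) * q z" by (simp add: v_def)
    then have "p k z * (z ^ n - lam ^ n) = (z - lam) * ((1 - v z) * (\<Sum>i<k. v z ^ i))"
      by (simp only: p_def q_factor mult_ac)
    then show ?thesis by (simp only: one_diff_power_eq)
  qed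
  have "v lam = 0" using q_lam by (simp add: v_def)
  then show ?thesis using that[OF v_poly _ p_poly p_factor] by blast
qed

section \<open>Ascent and descent\<close>

lemma kernel_funpow_stable:
  fixes T :: "'a::zero \<Rightarrow> 'a"
  assumes "{x. (T ^^ p) x = 0} = {x. (T ^^ Suc p) x = 0}"
  shows "{x. (T ^^ (p + j)) x = 0} = {x. (T ^^ p) x = 0}"
proof -
  have stable: "(T ^^ p) y = 0 \<longleftrightarrow> (T ^^ Suc p) y = 0" for y
    using assms by blast
  have "(T ^^ (p + j)) x = 0 \<longleftrightarrow> (T ^^ p) x = 0" for x
  proof (induction j)
    case (Suc j)
    have "(T ^^ (p + Suc j)) x = (T ^^ Suc p) ((T ^^ j) x)"
      by (metis add_Suc_shift funpow_add o_apply)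
    also have "\<dots> = 0 \<longleftrightarrow> (T ^^ p) ((T ^^ j) x) = 0"
      by (rule stable[symmetric])
    also have "(T ^^ p) ((T ^^ j) x) = (T ^^ (p + j)) x"
      by (simp only: funpow_add o_apply)
    finally show ?case using Suc.IH by simp
  qed simp
  then show ?thesis by blast
qed

lemma range_funpow_stable:
  fixes T :: "'a \<Rightarrow> 'a"
  assumes "range (T ^^ p) = range (T ^^ Suc p)"
  shows "range (T ^^ (p + j)) = range (T ^^ p)"
proof (induction j)
  case (Suc j)
  have "T ^^ (p + Suc j) = T ^^ j \<circ> T ^^ Suc p"
    by (metis add.commute add_Suc_shift funpow_add)
  then have "range (T ^^ (p + Suc j)) = (T ^^ j) ` range (T ^^ Suc p)"
    by (simp only: image_comp)
  also have "\<dots> = (T ^^ j) ` range (T ^^ p)"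
    by (simp only: assms)
  also have "\<dots> = range (T ^^ (p + j))"
    by (simp only: image_comp funpow_add[symmetric] add.commute)
  finally show ?case using Suc.IH by simp
qed simp

context
  fixes T :: "'a::ab_group_add \<Rightarrow> 'a"
  assumes T_diff: "\<And>x y. T (x - y) = T x - T y"
begin

lemma funpow_diff_of_diff: "(T ^^ k) (x - y) = (T ^^ k) x - (T ^^ k) y"
  by (induction k) (simp_all add: T_diff)

lemma funpow_zero_of_diff: "(T ^^ k) 0 = 0"
  using funpow_diff_of_diff[of k 0 0] by simp

lemma kernel_funpow_stable_of_range_stable:
  assumes Ka: "{x. (T ^^ a) x = 0} = {x. (T ^^ Suc a) x = 0}"
    and Rd: "range (T ^^ d) = range (T ^^ Suc d)"
  shows "{x. (T ^^ d) x = 0} = {x. (T ^^ Suc d) x = 0}"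
proof -
  have "(T ^^ d) x = 0" if x: "(T ^^ Suc d) x = 0" for x
  proof -
    have "(T ^^ d) x \<in> range (T ^^ (d + a))" using range_funpow_stable[OF Rd, of a] by auto
    then obtain z where z: "(T ^^ d) x = (T ^^ (d + a)) z" by auto
    then have "(T ^^ (a + Suc d)) z = 0" using x by (simp add: add.commute)
    then have "(T ^^ a) z = 0" using kernel_funpow_stable[OF Ka, of "Suc d"] by blast
    then show ?thesis using z by (simp add: funpow_add funpow_zero_of_diff)
  qed
  moreover have "(T ^^ Suc d) x = 0" if "(T ^^ d) x = 0" for x
    using that funpow_zero_of_diff[of 1] by simp
  ultimately show ?thesis by blast
qed

lemma range_funpow_stable_of_kernel_stable:
  assumes Ka: "{x. (T ^^ a) x = 0} = {x. (T ^^ Suc a) x = 0}"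
    and Rd: "range (T ^^ d) = range (T ^^ Suc d)"
  shows "range (T ^^ a) = range (T ^^ Suc a)"
proof (cases "d \<le> a")
  case True
  then show ?thesis
    using range_funpow_stable[OF Rd, of "a - d"] range_funpow_stable[OF Rd, of "Suc a - d"]
    by (simp add: Suc_diff_le)
next
  case False
  have "(T ^^ a) x \<in> range (T ^^ Suc a)" for x
  proof -
    have "(T ^^ d) x \<in> range (T ^^ (d + d))" using range_funpow_stable[OF Rd, of d] by auto
    then obtain z where z: "(T ^^ d) x = (T ^^ (d + d)) z" by auto
    then have "(T ^^ (a + (d - a))) (x - (T ^^ d) z) = 0"
      using False by (simp add: funpow_diff_of_diff funpow_add)
    then have "(T ^^ a) (x - (T ^^ d) z) = 0"
      using kernel_funpow_stable[OF Ka, of "d - a"] by blast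
    then have "(T ^^ a) x = (T ^^ (a + d)) z" by (simp add: funpow_diff_of_diff funpow_add)
    also have "a + d = Suc a + (d - 1)" using False by simp
    finally have "(T ^^ a) x = (T ^^ Suc a) ((T ^^ (d - 1)) z)" by (simp only: funpow_add o_apply)
    then show ?thesis by (metis rangeI)
  qed
  then have "range (T ^^ a) \<subseteq> range (T ^^ Suc a)" by auto
  moreover have "range (T ^^ Suc a) \<subseteq> range (T ^^ a)"
    unfolding funpow_Suc_right by auto
  ultimately show ?thesis by blast
qed

end

lemma pole_conditions_of_stable:
  fixes T :: "'a::complex_inner_space \<Rightarrow> 'a"
  assumes T_diff: "\<And>x y. T (x - y) = T x - T y"
    and kernel: "{x. (T ^^ m) x = 0} = {x. (T ^^ Suc m) x = 0}"
    and range: "range (T ^^ m) = range (T ^^ Suc m)"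
    and nontrivial: "\<exists>x. x \<noteq> 0 \<and> T x = 0"
  shows "0 < ascent T \<and> ascent T = descent T \<and> ascent T < \<infinity>"
proof -
  define a where "a = (LEAST p. {x. (T ^^ p) x = 0} = {x. (T ^^ Suc p) x = 0})"
  define d where "d = (LEAST p. range (T ^^ p) = range (T ^^ Suc p))"
  have Ka: "{x. (T ^^ a) x = 0} = {x. (T ^^ Suc a) x = 0}"
    unfolding a_def by (rule LeastI_ex) (use kernel in blast)
  have Rd: "range (T ^^ d) = range (T ^^ Suc d)"
    unfolding d_def by (rule LeastI_ex) (use range in blast)
  have "a \<le> d"
    unfolding a_def by (rule Least_le, rule kernel_funpow_stable_of_range_stable[OF T_diff Ka Rd])
  moreover have "d \<le> a"
    unfolding d_def by (rule Least_le, rule range_funpow_stable_of_kernel_stable[OF T_diff Ka Rd])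
  moreover have "a \<noteq> 0"
  proof
    assume "a = 0"
    then have "{x. x = 0} = {x. T x = 0}" using Ka by simp
    then show False using nontrivial by blast
  qed
  moreover have "ascent T = enat a" "descent T = enat d"
    using kernel range by (auto simp: ascent_def descent_def a_def d_def)
  ultimately show ?thesis by (simp add: zero_enat_def)
qed

section \<open>Log-convex sequences and normal operators\<close>

lemma log_convex_seq_power_le:
  fixes a :: "nat \<Rightarrow> real"
  assumes nonneg: "\<And>k. a k \<ge> 0" and log_convex: "\<And>k. (a (Suc k))\<^sup>2 \<le> a (Suc (Suc k)) * a k"
  shows "a 1 ^ Suc k \<le> a 0 ^ k * a (Suc k)"
proof -
  have ratio: "a 1 * a j \<le> a 0 * a (Suc j)" for j
  proof (induction j)
    case (Suc j)
    show ?case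
    proof (cases "a (Suc j) = 0")
      case False
      then have pos: "a (Suc j) > 0" using nonneg[of "Suc j"] by simp
      have "a 1 * (a (Suc j))\<^sup>2 \<le> a (Suc (Suc j)) * (a 1 * a j)"
        using mult_left_mono[OF log_convex[of j] nonneg[of 1]] by (simp add: algebra_simps)
      also have "\<dots> \<le> a (Suc (Suc j)) * (a 0 * a (Suc j))"
        using Suc.IH nonneg[of "Suc (Suc j)"] by (rule mult_left_mono)
      finally have "(a 1 * a (Suc j)) * a (Suc j) \<le> (a 0 * a (Suc (Suc j))) * a (Suc j)"
        by (simp add: power2_eq_square algebra_simps)
      then show ?thesis using pos by simp
    qed (use nonneg in simp)
  qed (simp add: mult.commute)
  show ?thesis
  proof (induction k)
    case (Suc k)
    have "a 1 ^ Suc (Suc k) \<le> a 1 * (a 0 ^ k * a (Suc k))"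
      using mult_left_mono[OF Suc.IH nonneg[of 1]] by simp
    also have "\<dots> \<le> a 0 ^ k * (a 0 * a (Suc (Suc k)))"
      using mult_left_mono[OF ratio[of "Suc k"], of "a 0 ^ k"] nonneg[of 0] by (simp add: algebra_simps)
    finally show ?case by (simp add: algebra_simps)
  qed simp
qed

lemma log_convex_seq_fast_decay_imp_zero:
  fixes a :: "nat \<Rightarrow> real"
  assumes nonneg: "\<And>k. a k \<ge> 0" and log_convex: "\<And>k. (a (Suc k))\<^sup>2 \<le> a (Suc (Suc k)) * a k"
    and decay: "\<And>e. e > 0 \<Longrightarrow> \<exists>K. \<forall>k. a k \<le> e ^ k * K"
  shows "a 1 = 0"
proof (rule ccontr)
  assume "a 1 \<noteq> 0"
  then have a1: "a 1 > 0" using nonneg[of 1] by simp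
  have a0: "a 0 > 0"
    using log_convex[of 0] mult_pos_pos[OF a1 a1] nonneg[of 0]
    by (cases "a 0 = 0") (auto simp: power2_eq_square)
  obtain K where K: "\<And>k. a k \<le> (a 1 / (2 * a 0)) ^ k * K"
    using decay[of "a 1 / (2 * a 0)"] a0 a1 by auto
  have "a 0 * 2 ^ Suc k \<le> K" for k
  proof -
    have "a 1 ^ Suc k \<le> a 0 ^ k * ((a 1 / (2 * a 0)) ^ Suc k * K)"
      using log_convex_seq_power_le[where a = a, OF nonneg log_convex, of k]
        mult_left_mono[OF K[of "Suc k"], of "a 0 ^ k"] a0 by simp
    also have "\<dots> = a 1 ^ Suc k * (K / (a 0 * 2 ^ Suc k))"
      using a0 by (simp add: power_divide power_mult_distrib field_simps)
    finally show ?thesis using a0 a1 by (simp add: field_simps)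
  qed
  moreover obtain k where "K / a 0 < 2 ^ k" using real_arch_pow[of 2 "K / a 0"] by auto
  ultimately have "a 0 * 2 ^ Suc k < a 0 * 2 ^ k"
    using a0 order.strict_trans1[of "a 0 * 2 ^ Suc k" K "a 0 * 2 ^ k"]
    by (simp add: divide_less_eq mult.commute)
  then show False using a0 by simp
qed

text \<open>For a normal operator, \<open>\<parallel>Q u\<parallel>\<^sup>2 = \<langle>Q\<^sup>* Q u, u\<rangle>\<close> and \<open>\<parallel>Q\<^sup>* Q u\<parallel> = \<parallel>Q Q u\<parallel>\<close>.\<close>
lemma normal_norm_square_le:
  fixes Q Qs :: "'a::complex_inner_space \<Rightarrow> 'a"
  assumes adj: "\<And>x y. cinner (Qs x) y = cinner x (Q y)" and comm: "\<And>x. Q (Qs x) = Qs (Q x)"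
  shows "(norm (Q u))\<^sup>2 \<le> norm (Q (Q u)) * norm u"
proof -
  have norm_adj: "norm (Qs v) = norm (Q v)" for v
  proof -
    have "cinner (Qs v) (Qs v) = cnj (cinner (Q v) (Q v))"
      by (metis adj comm cinner_commute)
    then have "(norm (Qs v))\<^sup>2 = (norm (Q v))\<^sup>2"
      by (metis complex_mod_cnj norm_cinner_self)
    then show ?thesis by (simp add: power2_eq_iff_nonneg)
  qed
  have "(norm (Q u))\<^sup>2 = norm (cinner (Qs (Q u)) u)" by (simp add: adj norm_cinner_self)
  also have "\<dots> \<le> norm (Q (Q u)) * norm u" using norm_cinner_le norm_adj by metis
  finally show ?thesis .
qed

lemma adjoint_funpow:
  fixes A As :: "'a::complex_inner_space \<Rightarrow> 'a"
  assumes "\<And>x y. cinner (A x) y = cinner x (As y)"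
  shows "cinner ((A ^^ k) x) y = cinner x ((As ^^ k) y)"
proof (induction k arbitrary: y)
  case (Suc k)
  have "cinner ((A ^^ Suc k) x) y = cinner x ((As ^^ k) (As y))" by (simp add: assms Suc.IH)
  then show ?case by (simp add: funpow_swap1)
qed simp

lemma normal_shiftop_norm_square_le:
  fixes N Ns :: "'a::complex_inner_space \<Rightarrow> 'a"
  assumes N: "bounded_clinear N" and adj: "\<And>x y. cinner (N x) y = cinner x (Ns y)"
    and comm: "\<And>x. Ns (N x) = N (Ns x)"
  shows "(norm (shiftop N c u))\<^sup>2 \<le> norm (shiftop N c (shiftop N c u)) * norm u"
proof (rule normal_norm_square_le)
  have adj': "cinner (Ns x) y = cinner x (N y)" for x y
    by (metis adj cinner_commute)
  have Ns_diff: "Ns (x - y) = Ns x - Ns y" for x y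
    by (rule cinner_eqI) (simp add: adj[symmetric] cinner_diff_right bounded_clinear_diff[OF N])
  have Ns_scaleC: "Ns (a *\<^sub>C x) = a *\<^sub>C Ns x" for a x
    by (rule cinner_eqI) (simp add: adj[symmetric] cinner_scaleC_right)
  show "cinner (shiftop Ns (cnj c) x) y = cinner x (shiftop N c y)" for x y
    by (simp add: shiftop_def cinner_diff_left cinner_diff_right cinner_scaleC_left
        cinner_scaleC_right adj')
  show "shiftop N c (shiftop Ns (cnj c) x) = shiftop Ns (cnj c) (shiftop N c x)" for x
    by (simp add: shiftop_def bounded_clinear_diff[OF N] bounded_clinear_scaleC[OF N] Ns_diff
        Ns_scaleC comm scaleC_diff_right algebra_simps mult.commute)
qed

section \<open>The resolvent near an isolated point of the spectrum\<close>

locale punctured_resolvent =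
  fixes A :: "'a::complex_hilbert_space \<Rightarrow> 'a" and lam :: complex and rho :: real
    and R :: "complex \<Rightarrow> 'a \<Rightarrow> 'a"
  assumes A: "bounded_clinear A"
    and rho: "rho > 0"
    and R: "\<And>z. z \<in> ball lam rho - {lam} \<Longrightarrow> bounded_clinear (R z)"
    and R_left: "\<And>z x. z \<in> ball lam rho - {lam} \<Longrightarrow> R z (A x - z *\<^sub>C x) = x"
    and R_right: "\<And>z x. z \<in> ball lam rho - {lam} \<Longrightarrow> A (R z x) - z *\<^sub>C R z x = x"
begin

abbreviation "D \<equiv> ball lam rho - {lam}"

abbreviation "T \<equiv> shiftop A lam"

lemma open_D: "open D"
  by (simp add: open_delete)

lemma sphere_subset_D: "0 < r \<Longrightarrow> r < rho \<Longrightarrow> sphere lam r \<subseteq> D"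
  by (auto simp: dist_commute)

lemma resolvent_commute: "z \<in> D \<Longrightarrow> R z (A x) = A (R z x)"
proof -
  assume z: "z \<in> D"
  have "R z (A x) = R z ((A x - z *\<^sub>C x) + z *\<^sub>C x)" by simp
  also have "\<dots> = x + z *\<^sub>C R z x"
    by (simp only: bounded_clinear_add[OF R[OF z]] bounded_clinear_scaleC[OF R[OF z]] R_left[OF z])
  also have "\<dots> = A (R z x)" using R_right[OF z, of x] by (simp add: algebra_simps)
  finally show ?thesis .
qed

lemma resolvent_identity:
  assumes z: "z \<in> D" and z0: "z0 \<in> D"
  shows "R z x - R z0 x = (z - z0) *\<^sub>C R z (R z0 x)"
proof -
  define u where "u = R z0 x"
  have "x = (A u - z *\<^sub>C u) + (z - z0) *\<^sub>C u"
    using R_right[OF z0, of x] by (simp add: u_def scaleC_diff_left algebra_simps)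
  then have "R z x = R z (A u - z *\<^sub>C u) + R z ((z - z0) *\<^sub>C u)"
    by (metis R[OF z] bounded_clinear_add)
  then show ?thesis by (simp add: u_def bounded_clinear_scaleC[OF R[OF z]] R_left[OF z])
qed

text \<open>The resolvent identity gives \<open>\<parallel>R z x\<parallel> \<le> K0 \<parallel>x\<parallel> + \<bar>z - z0\<bar> K0 \<parallel>R z x\<parallel>\<close>, and the last
  term is absorbed as soon as \<open>\<bar>z - z0\<bar> K0 \<le> 1/2\<close>.\<close>
lemma resolvent_local_bound:
  assumes z0: "z0 \<in> D"
  shows "\<exists>K>0. \<exists>d>0. ball z0 d \<subseteq> D \<and> (\<forall>z\<in>ball z0 d. \<forall>x. norm (R z x) \<le> K * norm x)"
proof -
  obtain K0 where K0: "K0 > 0" "\<And>x. norm (R z0 x) \<le> K0 * norm x"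
    using bounded_clinear_pos_bound[OF R[OF z0]] by auto
  obtain e where e: "e > 0" "ball z0 e \<subseteq> D" using open_D z0 openE by blast
  define d where "d = min e (1 / (2 * K0))"
  have "norm (R z x) \<le> (2 * K0) * norm x" if z: "z \<in> ball z0 d" for z x
  proof -
    have zD: "z \<in> D" using z e by (auto simp: d_def)
    have "cmod (z - z0) < 1 / (2 * K0)" using z by (simp add: d_def dist_norm norm_minus_commute)
    then have dz: "cmod (z - z0) * K0 \<le> 1/2" using K0 by (simp add: field_simps)
    have "R z x = R z0 x + (z - z0) *\<^sub>C R z0 (R z x)"
      using resolvent_identity[OF z0 zD, of x]
      by (simp add: scaleC_diff_left algebra_simps scaleC_minus_left)
    then have "norm (R z x) \<le> norm (R z0 x) + norm ((z - z0) *\<^sub>C R z0 (R z x))"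
      using norm_triangle_ineq by metis
    also have "\<dots> = norm (R z0 x) + cmod (z - z0) * norm (R z0 (R z x))"
      by (simp add: norm_scaleC)
    also have "\<dots> \<le> K0 * norm x + cmod (z - z0) * (K0 * norm (R z x))"
      by (intro add_mono K0(2) mult_left_mono) simp_all
    also have "\<dots> \<le> K0 * norm x + (1/2) * norm (R z x)"
      using dz by (intro add_left_mono) (metis mult.assoc mult_right_mono norm_ge_zero)
    finally show ?thesis by simp
  qed
  moreover have "d > 0" "ball z0 d \<subseteq> D" using e K0 by (auto simp: d_def)
  ultimately show ?thesis using K0 by (intro exI[of _ "2 * K0"]) auto
qed

lemma resolvent_tendsto:
  assumes z0: "z0 \<in> D"
  shows "((\<lambda>z. R z u) \<longlongrightarrow> R z0 u) (at z0)"
proof -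
  obtain K d where d: "d > 0" "ball z0 d \<subseteq> D"
    and K: "\<And>z x. z \<in> ball z0 d \<Longrightarrow> norm (R z x) \<le> K * norm x"
    using resolvent_local_bound[OF z0] by blast
  have "eventually (\<lambda>z. z \<in> ball z0 d) (at z0)"
    using d by (intro eventually_at_in_open') auto
  then have le: "eventually (\<lambda>z. norm (R z u - R z0 u) \<le> cmod (z - z0) * (K * norm (R z0 u))) (at z0)"
  proof eventually_elim
    case (elim z)
    then have "z \<in> D" using d by blast
    then have "norm (R z u - R z0 u) = cmod (z - z0) * norm (R z (R z0 u))"
      using resolvent_identity[of z z0 u] z0 by (simp add: norm_scaleC)
    also have "\<dots> \<le> cmod (z - z0) * (K * norm (R z0 u))"
      by (intro mult_left_mono K elim) simp_all
    finally show ?case .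
  qed
  have "((\<lambda>z. cmod (z - z0) * (K * norm (R z0 u))) \<longlongrightarrow> 0) (at z0)"
    by (rule tendsto_mult_left_zero) (intro tendsto_eq_intros, auto)
  then show ?thesis
    by (rule LIM_zero_cancel[OF Lim_null_comparison[OF le]])
qed

lemma continuous_on_resolvent: "continuous_on D (\<lambda>z. R z u)"
  using resolvent_tendsto open_D by (simp add: continuous_on_eq_continuous_at isCont_def)

text \<open>The resolvent identity is a difference quotient: the weak derivative at \<open>z0\<close> is \<open>R z0 (R z0 w)\<close>.\<close>
lemma holomorphic_on_cinner_resolvent: "(\<lambda>z. cinner y (R z w)) holomorphic_on D"
  unfolding holomorphic_on_open[OF open_D]
proof
  fix z0 assume z0: "z0 \<in> D"
  have "((\<lambda>z. cinner y (R z (R z0 w))) \<longlongrightarrow> cinner y (R z0 (R z0 w))) (at z0)"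
    using bounded_linear.tendsto[OF bounded_linear_cinner_right resolvent_tendsto[OF z0]] .
  moreover have "eventually
      (\<lambda>z. cinner y (R z (R z0 w)) = (cinner y (R z w) - cinner y (R z0 w)) / (z - z0)) (at z0)"
    using eventually_at_in_open'[OF open_D z0] eventually_neq_at_within[of z0 z0 UNIV]
  proof eventually_elim
    case (elim z)
    then have "cinner y (R z w) - cinner y (R z0 w) = (z - z0) * cinner y (R z (R z0 w))"
      using resolvent_identity[of z z0 w] z0
      by (simp add: cinner_diff_right[symmetric] cinner_scaleC_right)
    then show ?case using elim by (simp add: field_simps)
  qed
  ultimately have "((\<lambda>z. (cinner y (R z w) - cinner y (R z0 w)) / (z - z0))
      \<longlongrightarrow> cinner y (R z0 (R z0 w))) (at z0)"
    by (rule Lim_transform_eventually)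
  then show "\<exists>f'. ((\<lambda>z. cinner y (R z w)) has_field_derivative f') (at z0)"
    by (auto simp: has_field_derivative_iff)
qed

lemma resolvent_bounded_on_sphere:
  assumes "0 < r" "r < rho"
  shows "\<exists>M\<ge>0. \<forall>z\<in>sphere lam r. \<forall>x. norm (R z x) \<le> M * norm x"
proof (rule compact_uniform_bound[OF compact_sphere])
  fix z assume "z \<in> sphere lam r"
  then have "z \<in> D" using sphere_subset_D[OF assms] by blast
  then obtain K d where "d > 0" "\<forall>z'\<in>ball z d. \<forall>x. norm (R z' x) \<le> K * norm x"
    using resolvent_local_bound[of z] by auto
  then show "\<exists>K d. d > 0 \<and> (\<forall>z'\<in>ball z d. \<forall>x. norm (R z' x) \<le> K * norm x)"
    by (intro exI[of _ K] exI[of _ d]) simp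
qed

text \<open>\<open>riesz_calculus r f w\<close> is \<open>-(2\<pi>i)\<^sup>-\<^sup>1 \<ointegral> f(z) R(z) w dz\<close> over the circle of radius \<open>r\<close>,
  i.e.\ \<open>f(A) P w\<close> for the Riesz projection \<open>P\<close> of \<open>A\<close> at \<open>lam\<close>.\<close>
definition riesz_calculus :: "real \<Rightarrow> (complex \<Rightarrow> complex) \<Rightarrow> 'a \<Rightarrow> 'a" where
  "riesz_calculus r f w = - circle_integral lam r (\<lambda>z. f z *\<^sub>C R z w)"

lemma continuous_on_scaleC_resolvent:
  assumes r: "0 < r" "r < rho" and f: "continuous_on (sphere lam r) f"
  shows "continuous_on (sphere lam r) (\<lambda>z. f z *\<^sub>C R z w)"
  using f continuous_on_subset[OF continuous_on_resolvent sphere_subset_D[OF r]]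
  by (rule continuous_on_scaleC)

lemma riesz_calculus_add:
  assumes r: "0 < r" "r < rho"
    and f: "continuous_on (sphere lam r) f" and g: "continuous_on (sphere lam r) g"
  shows "riesz_calculus r (\<lambda>z. f z + g z) w = riesz_calculus r f w + riesz_calculus r g w"
  using circle_integral_add[OF r(1) continuous_on_scaleC_resolvent[OF r f]
      continuous_on_scaleC_resolvent[OF r g]]
  by (simp add: riesz_calculus_def scaleC_add_left)

lemma riesz_calculus_cmult:
  assumes r: "0 < r" "r < rho" and f: "continuous_on (sphere lam r) f"
  shows "riesz_calculus r (\<lambda>z. c * f z) w = c *\<^sub>C riesz_calculus r f w"
  using circle_integral_scaleC[OF r(1) continuous_on_scaleC_resolvent[OF r f], of c]
  by (simp add: riesz_calculus_def scaleC_minus_right)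

text \<open>Since \<open>A R(z) = 1 + z R(z)\<close> and \<open>\<ointegral> f = 0\<close> for a polynomial \<open>f\<close>.\<close>
lemma riesz_calculus_mult_ident:
  assumes r: "0 < r" "r < rho" and f: "complex_polynomial f"
  shows "A (riesz_calculus r f w) = riesz_calculus r (\<lambda>z. z * f z) w"
proof -
  have fc: "continuous_on (sphere lam r) f"
    by (rule complex_polynomial_continuous_on[OF f])
  have zfc: "continuous_on (sphere lam r) (\<lambda>z. z * f z)"
    by (intro complex_polynomial_continuous_on complex_polynomial_mult complex_polynomial_ident f)
  have "A (circle_integral lam r (\<lambda>z. f z *\<^sub>C R z w)) = circle_integral lam r (\<lambda>z. A (f z *\<^sub>C R z w))"
    by (rule bounded_clinear_circle_integral[OF r(1) continuous_on_scaleC_resolvent[OF r fc] A])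
  also have "\<dots> = circle_integral lam r (\<lambda>z. f z *\<^sub>C w + (z * f z) *\<^sub>C R z w)"
  proof (rule circle_integral_cong[OF r(1)])
    fix z assume "z \<in> sphere lam r"
    then have z: "z \<in> D" using sphere_subset_D[OF r] by auto
    have "A (R z w) = w + z *\<^sub>C R z w" using R_right[OF z, of w] by (simp add: algebra_simps)
    then show "A (f z *\<^sub>C R z w) = f z *\<^sub>C w + (z * f z) *\<^sub>C R z w"
      by (simp add: bounded_clinear_scaleC[OF A] scaleC_add_right mult.commute)
  qed
  also have "\<dots> = circle_integral lam r (\<lambda>z. f z *\<^sub>C w)
      + circle_integral lam r (\<lambda>z. (z * f z) *\<^sub>C R z w)"
    by (rule circle_integral_add[OF r(1)])
      (auto intro: continuous_intros fc continuous_on_scaleC_resolvent[OF r zfc])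
  also have "circle_integral lam r (\<lambda>z. f z *\<^sub>C w) = 0"
    using circle_integral_scalar_function[OF r(1) fc
        complex_polynomial_has_contour_integral_circlepath[OF f]]
    by simp
  finally show ?thesis unfolding riesz_calculus_def by (simp add: bounded_clinear_minus[OF A])
qed

lemma cinner_circle_integral_resolvent:
  assumes r: "0 < r" "r < rho" and f: "complex_polynomial f"
  shows "cinner y (circle_integral lam r (\<lambda>z. f z *\<^sub>C R z w))
    = residue (\<lambda>z. f z * cinner y (R z w)) lam"
proof -
  define h where "h = (\<lambda>z. f z * cinner y (R z w))"
  have "h holomorphic_on D"
    unfolding h_def
    by (intro holomorphic_on_mult complex_polynomial_holomorphic[OF f] holomorphic_on_cinner_resolvent)
  then have "(h has_contour_integral 2 * pi * \<i> * residue h lam) (circlepath lam r)"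
    by (intro base_residue[OF open_ball]) (use r rho in auto)
  moreover have "(h has_contour_integral
      2 * of_real pi * \<i> * cinner y (circle_integral lam r (\<lambda>z. f z *\<^sub>C R z w))) (circlepath lam r)"
    using has_contour_integral_cinner_circle_integral[OF r(1)
        continuous_on_scaleC_resolvent[OF r complex_polynomial_continuous_on[OF f]], of y]
    by (simp add: h_def cinner_scaleC_right)
  ultimately show ?thesis
    using has_contour_integral_unique by (fastforce simp: h_def)
qed

lemma riesz_calculus_radius_indep:
  assumes "0 < r1" "r1 < rho" "0 < r2" "r2 < rho" and "complex_polynomial f"
  shows "riesz_calculus r1 f w = riesz_calculus r2 f w"
  unfolding riesz_calculus_def using assms
  by (metis (no_types, lifting) cinner_eqI cinner_circle_integral_resolvent)

lemma norm_riesz_calculus_le: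
  assumes r: "0 < r" "r < rho" and f: "continuous_on (sphere lam r) f"
    and B: "\<And>z. z \<in> sphere lam r \<Longrightarrow> cmod (f z) \<le> B"
    and M: "M \<ge> 0" "\<And>z x. z \<in> sphere lam r \<Longrightarrow> norm (R z x) \<le> M * norm x"
  shows "norm (riesz_calculus r f w) \<le> r * (B * (M * norm w))"
proof -
  have "norm (circle_integral lam r (\<lambda>z. f z *\<^sub>C R z w)) \<le> r * (B * (M * norm w))"
  proof (rule norm_circle_integral_le[OF r(1) continuous_on_scaleC_resolvent[OF r f]])
    fix z assume z: "z \<in> sphere lam r"
    have "B \<ge> 0" using B[OF z] norm_ge_zero order_trans by blast
    then show "norm (f z *\<^sub>C R z w) \<le> B * (M * norm w)"
      unfolding norm_scaleC by (intro mult_mono B[OF z] M(2)[OF z]) auto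
  qed
  then show ?thesis by (simp add: riesz_calculus_def)
qed

lemma shiftop_riesz_calculus:
  assumes r: "0 < r" "r < rho" and f: "complex_polynomial f"
  shows "T (riesz_calculus r f w) = riesz_calculus r (\<lambda>z. (z - lam) * f z) w"
proof -
  have fc: "continuous_on (sphere lam r) f"
    by (rule complex_polynomial_continuous_on[OF f])
  have zfc: "continuous_on (sphere lam r) (\<lambda>z. z * f z)"
    by (intro complex_polynomial_continuous_on complex_polynomial_mult complex_polynomial_ident f)
  have "(\<lambda>z. (z - lam) * f z) = (\<lambda>z. z * f z + (- lam) * f z)"
    by (simp add: fun_eq_iff algebra_simps)
  then have "riesz_calculus r (\<lambda>z. (z - lam) * f z) w
      = riesz_calculus r (\<lambda>z. z * f z) w + (- lam) *\<^sub>C riesz_calculus r f w"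
    using riesz_calculus_add[OF r zfc, of "\<lambda>z. (- lam) * f z" w]
      riesz_calculus_cmult[OF r fc, of "- lam" w]
    by (simp add: continuous_intros fc)
  then show ?thesis
    by (simp add: shiftop_def riesz_calculus_mult_ident[OF r f] scaleC_minus_left)
qed

lemma riesz_calculus_polynomial_mult_zero:
  assumes r: "0 < r" "r < rho" and g: "complex_polynomial g"
  shows "complex_polynomial f \<Longrightarrow> (\<And>w. riesz_calculus r f w = 0) \<Longrightarrow> riesz_calculus r (\<lambda>z. g z * f z) w = 0"
  using g
proof (induction arbitrary: f w rule: complex_polynomial.induct)
  case (complex_polynomial_const c)
  then show ?case
    using riesz_calculus_cmult[OF r complex_polynomial_continuous_on] by simp
next
  case complex_polynomial_ident
  then show ?case
    using riesz_calculus_mult_ident[OF r] bounded_clinear_zero[OF A] by metis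
next
  case (complex_polynomial_add g1 g2)
  have "(\<lambda>z. (g1 z + g2 z) * f z) = (\<lambda>z. g1 z * f z + g2 z * f z)"
    by (simp add: fun_eq_iff algebra_simps)
  with complex_polynomial_add show ?case
    by (simp add: riesz_calculus_add[OF r] complex_polynomial_continuous_on complex_polynomial_mult)
next
  case (complex_polynomial_mult g1 g2)
  have "(\<lambda>z. g1 z * g2 z * f z) = (\<lambda>z. g1 z * (g2 z * f z))"
    by (simp add: fun_eq_iff algebra_simps)
  with complex_polynomial_mult show ?case
    by (simp add: complex_polynomial.complex_polynomial_mult)
qed

lemma half_rho: "0 < rho/2" "rho/2 < rho"
  using rho by auto

definition riesz_proj :: "'a \<Rightarrow> 'a" where
  "riesz_proj w = riesz_calculus (rho/2) (\<lambda>z. 1) w"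

definition reduced_resolvent :: "'a \<Rightarrow> 'a" where
  "reduced_resolvent x = circle_integral lam (rho/2) (\<lambda>z. inverse (z - lam) *\<^sub>C R z x)"

lemma funpow_shiftop_riesz_proj:
  "(T ^^ k) (riesz_proj w) = riesz_calculus (rho/2) (\<lambda>z. (z - lam) ^ k) w"
proof (induction k)
  case (Suc k)
  have "complex_polynomial (\<lambda>z. (z - lam) ^ k)"
    by (intro complex_polynomial_power complex_polynomial_diff complex_polynomial_ident
        complex_polynomial_const)
  with Suc show ?case by (simp add: shiftop_riesz_calculus[OF half_rho])
qed (simp add: riesz_proj_def)

lemma continuous_on_inverse_resolvent:
  "continuous_on (sphere lam (rho/2)) (\<lambda>z. inverse (z - lam) *\<^sub>C R z x)"
  using half_rho by (intro continuous_on_scaleC_resolvent) (auto intro!: continuous_intros)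

lemma shiftop_reduced_resolvent: "T (reduced_resolvent x) = x - riesz_proj x"
proof -
  have inv: "((\<lambda>z. inverse (z - lam)) has_contour_integral 2 * of_real pi * \<i>) (circlepath lam (rho/2))"
    using Cauchy_integral_circlepath_simple[of "\<lambda>_. 1" lam "rho/2" lam] half_rho
    by (simp add: inverse_eq_divide)
  have "T (reduced_resolvent x) = circle_integral lam (rho/2) (\<lambda>z. T (inverse (z - lam) *\<^sub>C R z x))"
    unfolding reduced_resolvent_def
    by (rule bounded_clinear_circle_integral[OF half_rho(1) continuous_on_inverse_resolvent
          bounded_clinear_shiftop[OF A]])
  also have "\<dots> = circle_integral lam (rho/2) (\<lambda>z. inverse (z - lam) *\<^sub>C x + R z x)"
  proof (rule circle_integral_cong[OF half_rho(1)])
    fix z assume "z \<in> sphere lam (rho/2)"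
    then have z: "z \<in> D" using sphere_subset_D[OF half_rho] by auto
    have "T (R z x) = x + (z - lam) *\<^sub>C R z x"
      using R_right[OF z, of x] by (simp add: shiftop_def scaleC_diff_left algebra_simps)
    then show "T (inverse (z - lam) *\<^sub>C R z x) = inverse (z - lam) *\<^sub>C x + R z x"
      using z by (simp add: bounded_clinear_scaleC[OF bounded_clinear_shiftop[OF A]] scaleC_add_right)
  qed
  also have "\<dots> = circle_integral lam (rho/2) (\<lambda>z. inverse (z - lam) *\<^sub>C x)
      + circle_integral lam (rho/2) (\<lambda>z. R z x)"
    using half_rho
    by (intro circle_integral_add continuous_on_subset[OF continuous_on_resolvent sphere_subset_D])
      (auto intro!: continuous_intros)
  also have "circle_integral lam (rho/2) (\<lambda>z. inverse (z - lam) *\<^sub>C x) = x"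
  proof -
    have "continuous_on (sphere lam (rho/2)) (\<lambda>z. inverse (z - lam))"
      using half_rho by (intro continuous_intros) auto
    then show ?thesis using circle_integral_scalar_function[OF half_rho(1) _ inv, of x] by simp
  qed
  finally show ?thesis by (simp add: riesz_proj_def riesz_calculus_def)
qed

lemma reduced_resolvent_shiftop: "reduced_resolvent (T x) = x - riesz_proj x"
proof -
  have "reduced_resolvent (T x) = circle_integral lam (rho/2) (\<lambda>z. T (inverse (z - lam) *\<^sub>C R z x))"
    unfolding reduced_resolvent_def
  proof (rule circle_integral_cong[OF half_rho(1)])
    fix z assume "z \<in> sphere lam (rho/2)"
    then have z: "z \<in> D" using sphere_subset_D[OF half_rho] by auto
    have "R z (T x) = T (R z x)"
      by (simp add: shiftop_def bounded_clinear_diff[OF R[OF z]] bounded_clinear_scaleC[OF R[OF z]]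
          resolvent_commute[OF z])
    then show "inverse (z - lam) *\<^sub>C R z (T x) = T (inverse (z - lam) *\<^sub>C R z x)"
      by (simp add: bounded_clinear_scaleC[OF bounded_clinear_shiftop[OF A]])
  qed
  also have "\<dots> = T (reduced_resolvent x)"
    unfolding reduced_resolvent_def
    by (rule bounded_clinear_circle_integral[OF half_rho(1) continuous_on_inverse_resolvent
          bounded_clinear_shiftop[OF A], symmetric])
  finally show ?thesis using shiftop_reduced_resolvent by simp
qed

lemma bounded_clinear_reduced_resolvent: "bounded_clinear reduced_resolvent"
proof -
  obtain M where M: "M \<ge> 0" "\<And>z x. z \<in> sphere lam (rho/2) \<Longrightarrow> norm (R z x) \<le> M * norm x"
    using resolvent_bounded_on_sphere[OF half_rho] by blast
  show ?thesis
    unfolding reduced_resolvent_def[abs_def]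
  proof (rule bounded_clinear_circle_integral_family[OF half_rho(1)])
    fix z assume z: "z \<in> sphere lam (rho/2)"
    then have "z \<in> D" using sphere_subset_D[OF half_rho] by auto
    then show "bounded_clinear (\<lambda>x. inverse (z - lam) *\<^sub>C R z x)"
      by (intro bounded_clinear_compose[OF bounded_clinear_scaleC_const R])
    fix x
    have "cmod (z - lam) = rho/2" using z by (simp add: dist_norm norm_minus_commute)
    then have "norm (inverse (z - lam) *\<^sub>C R z x) = inverse (rho/2) * norm (R z x)"
      by (simp only: norm_scaleC norm_inverse)
    also have "\<dots> \<le> inverse (rho/2) * (M * norm x)"
      using M(2)[OF z, of x] rho by (intro mult_left_mono) auto
    finally show "norm (inverse (z - lam) *\<^sub>C R z x) \<le> (inverse (rho/2) * M) * norm x"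
      by (simp add: mult.assoc)
  qed (rule continuous_on_inverse_resolvent)
qed

lemma reduced_resolvent_funpow_shiftop:
  "reduced_resolvent ((T ^^ k) x) = (T ^^ k) (reduced_resolvent x)"
proof (induction k)
  case (Suc k)
  have "reduced_resolvent (T y) = T (reduced_resolvent y)" for y
    using reduced_resolvent_shiftop shiftop_reduced_resolvent by simp
  with Suc show ?case by simp
qed simp

lemma kernel_funpow_shiftop_stable:
  assumes nil: "\<And>w. (T ^^ m) (riesz_proj w) = 0"
  shows "{x. (T ^^ m) x = 0} = {x. (T ^^ Suc m) x = 0}"
proof -
  have Tm: "bounded_clinear (T ^^ m)"
    by (rule bounded_clinear_funpow[OF bounded_clinear_shiftop[OF A]])
  have "(T ^^ m) x = 0" if x: "(T ^^ Suc m) x = 0" for x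
  proof -
    have "(T ^^ m) x = (T ^^ m) (riesz_proj x + reduced_resolvent (T x))"
      using reduced_resolvent_shiftop[of x] by simp
    also have "\<dots> = reduced_resolvent ((T ^^ Suc m) x)"
      by (simp add: bounded_clinear_add[OF Tm] nil reduced_resolvent_funpow_shiftop funpow_swap1)
    finally show ?thesis
      using x bounded_clinear_zero[OF bounded_clinear_reduced_resolvent] by simp
  qed
  moreover have "(T ^^ Suc m) x = 0" if "(T ^^ m) x = 0" for x
    using that bounded_clinear_zero[OF bounded_clinear_shiftop[OF A]] by simp
  ultimately show ?thesis by blast
qed

lemma range_funpow_shiftop_stable:
  assumes nil: "\<And>w. (T ^^ m) (riesz_proj w) = 0"
  shows "range (T ^^ m) = range (T ^^ Suc m)"
proof -
  have Tm: "bounded_clinear (T ^^ m)"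
    by (rule bounded_clinear_funpow[OF bounded_clinear_shiftop[OF A]])
  have into: "(T ^^ m) x = (T ^^ Suc m) (reduced_resolvent x)" for x
  proof -
    have "(T ^^ m) x = (T ^^ m) (riesz_proj x + T (reduced_resolvent x))"
      using shiftop_reduced_resolvent[of x] by simp
    also have "\<dots> = (T ^^ Suc m) (reduced_resolvent x)"
      by (simp add: bounded_clinear_add[OF Tm] nil funpow_swap1)
    finally show ?thesis .
  qed
  have succ: "(T ^^ Suc m) x = (T ^^ m) (T x)" for x
    by (simp add: funpow_swap1)
  show ?thesis
  proof
    show "range (T ^^ m) \<subseteq> range (T ^^ Suc m)" using into by (metis image_subset_iff rangeI)
    show "range (T ^^ Suc m) \<subseteq> range (T ^^ m)" using succ by (metis image_subset_iff rangeI)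
  qed
qed

text \<open>If \<open>A - lam\<close> were injective, \<open>P = 0\<close> and the reduced resolvent would invert \<open>A - lam\<close>.\<close>
lemma shiftop_not_injective:
  assumes lam: "lam \<in> spectrum A" and nil: "\<And>w. (T ^^ m) (riesz_proj w) = 0"
  shows "\<exists>x. x \<noteq> 0 \<and> T x = 0"
proof (rule ccontr)
  assume "\<not> (\<exists>x. x \<noteq> 0 \<and> T x = 0)"
  then have "(T ^^ k) x = 0 \<Longrightarrow> x = 0" for k x
    by (induction k arbitrary: x) (auto simp: funpow_swap1)
  then have "riesz_proj x = 0" for x using nil by blast
  then have "\<exists>B. bounded_clinear B \<and> (\<forall>x. B (T x) = x) \<and> (\<forall>x. T (B x) = x)"
    using bounded_clinear_reduced_resolvent reduced_resolvent_shiftop shiftop_reduced_resolvent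
    by (intro exI[of _ reduced_resolvent]) simp
  with lam show False unfolding spectrum_def by blast
qed

lemma pole_conditions_of_nilpotent:
  assumes "lam \<in> spectrum A" and "\<And>w. (T ^^ m) (riesz_proj w) = 0"
  shows "0 < ascent T \<and> ascent T = descent T \<and> ascent T < \<infinity>"
  using assms bounded_clinear_diff[OF bounded_clinear_shiftop[OF A]]
  by (intro pole_conditions_of_stable kernel_funpow_shiftop_stable range_funpow_shiftop_stable
      shiftop_not_injective) auto

lemma funpow_riesz_calculus:
  assumes r: "0 < r" "r < rho" and f: "complex_polynomial f"
  shows "(A ^^ j) (riesz_calculus r f w) = riesz_calculus r (\<lambda>z. z ^ j * f z) w"
proof (induction j)
  case (Suc j)
  have "complex_polynomial (\<lambda>z. z ^ j * f z)"
    by (intro complex_polynomial_mult complex_polynomial_power complex_polynomial_ident f)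
  with Suc show ?case by (simp add: riesz_calculus_mult_ident[OF r] mult.assoc)
qed simp

lemma shiftop_power_riesz_calculus:
  assumes r: "0 < r" "r < rho" and f: "complex_polynomial f"
  shows "shiftop (A ^^ n) (lam ^ n) (riesz_calculus r f w)
    = riesz_calculus r (\<lambda>z. (z ^ n - lam ^ n) * f z) w"
proof -
  have fc: "continuous_on (sphere lam r) f"
    by (rule complex_polynomial_continuous_on[OF f])
  have zfc: "continuous_on (sphere lam r) (\<lambda>z. z ^ n * f z)"
    by (intro complex_polynomial_continuous_on complex_polynomial_mult complex_polynomial_power
        complex_polynomial_ident f)
  have "(\<lambda>z. (z ^ n - lam ^ n) * f z) = (\<lambda>z. z ^ n * f z + (- (lam ^ n)) * f z)"
    by (simp add: fun_eq_iff algebra_simps)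
  then have "riesz_calculus r (\<lambda>z. (z ^ n - lam ^ n) * f z) w
      = riesz_calculus r (\<lambda>z. z ^ n * f z) w + (- (lam ^ n)) *\<^sub>C riesz_calculus r f w"
    using riesz_calculus_add[OF r zfc, of "\<lambda>z. (- (lam ^ n)) * f z" w]
      riesz_calculus_cmult[OF r fc, of "- (lam ^ n)" w]
    by (simp add: continuous_intros fc)
  then show ?thesis by (simp add: shiftop_def funpow_riesz_calculus[OF r f] scaleC_minus_left)
qed

lemma funpow_shiftop_power_riesz_proj:
  assumes r: "0 < r" "r < rho"
  shows "(shiftop (A ^^ n) (lam ^ n) ^^ k) (riesz_proj w)
    = riesz_calculus r (\<lambda>z. (z ^ n - lam ^ n) ^ k) w"
proof (induction k)
  case 0
  show ?case
    using riesz_calculus_radius_indep[OF half_rho r complex_polynomial_const]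
    by (simp add: riesz_proj_def)
next
  case (Suc k)
  have "complex_polynomial (\<lambda>z. (z ^ n - lam ^ n) ^ k)"
    by (intro complex_polynomial_power complex_polynomial_diff complex_polynomial_ident
        complex_polynomial_const)
  with Suc show ?case by (simp add: shiftop_power_riesz_calculus[OF r])
qed

text \<open>If \<open>v(lam) = 0\<close> then \<open>v\<^sup>k\<close> is geometrically small on small circles, so
  \<open>h(A) P = (h v\<^sup>k)(A) P\<close> is geometrically small.\<close>
lemma riesz_calculus_small_factor_bound:
  assumes h: "complex_polynomial h" and v: "complex_polynomial v" and v0: "v lam = 0"
    and zero: "\<And>k. riesz_calculus (rho/2) (\<lambda>z. h z * (1 - v z ^ k)) w = 0"
  shows "\<exists>K. \<forall>k. norm (riesz_calculus (rho/2) h w) \<le> K * (1/2) ^ k"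
proof -
  obtain r where r: "0 < r" "r < rho" and v_small: "\<And>z. z \<in> sphere lam r \<Longrightarrow> cmod (v z) \<le> 1/2"
    by (rule complex_polynomial_small_near_root[OF v v0 rho]) blast
  obtain M where M: "M \<ge> 0" "\<And>z x. z \<in> sphere lam r \<Longrightarrow> norm (R z x) \<le> M * norm x"
    using resolvent_bounded_on_sphere[OF r] by blast
  obtain B where B: "\<And>z. z \<in> sphere lam r \<Longrightarrow> cmod (h z) \<le> B"
    using compact_imp_bounded[OF compact_continuous_image[OF complex_polynomial_continuous_on[OF h]
          compact_sphere]] unfolding bounded_iff by (metis image_eqI)
  have hv: "complex_polynomial (\<lambda>z. h z * v z ^ k)" for k
    by (intro complex_polynomial_mult complex_polynomial_power h v)
  have "norm (riesz_calculus (rho/2) h w) \<le> (r * B * M * norm w) * (1/2) ^ k" for k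
  proof -
    have "riesz_calculus (rho/2) h w
        = riesz_calculus (rho/2) (\<lambda>z. h z * (1 - v z ^ k)) w
          + riesz_calculus (rho/2) (\<lambda>z. h z * v z ^ k) w"
      using riesz_calculus_add[OF half_rho, of "\<lambda>z. h z * (1 - v z ^ k)" "\<lambda>z. h z * v z ^ k" w]
      by (simp add: complex_polynomial_continuous_on hv h v complex_polynomial_mult
          complex_polynomial_diff complex_polynomial_const complex_polynomial_power algebra_simps)
    also have "\<dots> = riesz_calculus r (\<lambda>z. h z * v z ^ k) w"
      using zero riesz_calculus_radius_indep[OF half_rho r hv] by simp
    finally have "norm (riesz_calculus (rho/2) h w) = norm (riesz_calculus r (\<lambda>z. h z * v z ^ k) w)"
      by simp
    also have "\<dots> \<le> r * ((B * (1/2) ^ k) * (M * norm w))"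
    proof (rule norm_riesz_calculus_le[OF r complex_polynomial_continuous_on[OF hv] _ M])
      fix z assume z: "z \<in> sphere lam r"
      show "cmod (h z * v z ^ k) \<le> B * (1/2) ^ k"
        unfolding norm_mult norm_power using B[OF z] v_small[OF z]
        by (intro mult_mono power_mono) (auto intro: order_trans[OF norm_ge_zero])
    qed
    finally show ?thesis by (simp add: algebra_simps)
  qed
  then show ?thesis by blast
qed

lemma riesz_calculus_zero_of_small_factor:
  assumes "complex_polynomial h" and "complex_polynomial v" and "v lam = 0"
    and "\<And>k. riesz_calculus (rho/2) (\<lambda>z. h z * (1 - v z ^ k)) w = 0"
  shows "riesz_calculus (rho/2) h w = 0"
proof -
  obtain K where K: "\<And>k. norm (riesz_calculus (rho/2) h w) \<le> K * (1/2) ^ k"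
    using riesz_calculus_small_factor_bound[OF assms] by blast
  have "(\<lambda>k. K * (1/2::real) ^ k) \<longlonglongrightarrow> 0"
    by (intro tendsto_mult_right_zero LIMSEQ_power_zero) simp
  then have "norm (riesz_calculus (rho/2) h w) \<le> 0"
    using K by (intro LIMSEQ_le_const) auto
  then show ?thesis by simp
qed

end

section \<open>Isolated spectral points of \<open>n\<close>-normal operators\<close>

locale n_normal_punctured_resolvent = punctured_resolvent +
  fixes As :: "'a \<Rightarrow> 'a" and n :: nat
  assumes adjoint: "\<And>x y. cinner (A x) y = cinner x (As y)"
    and power_normal: "\<And>x. As ((A ^^ n) x) = (A ^^ n) (As x)"
    and n_pos: "n > 0"
begin

lemma funpow_adjoint_commute: "(As ^^ k) ((A ^^ n) x) = (A ^^ n) ((As ^^ k) x)"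
  by (induction k) (simp_all add: power_normal)

lemma norm_shiftop_power_square_le:
  "(norm (shiftop (A ^^ n) c u))\<^sup>2 \<le> norm (shiftop (A ^^ n) c (shiftop (A ^^ n) c u)) * norm u"
  by (rule normal_shiftop_norm_square_le[where N = "A ^^ n" and Ns = "As ^^ n"])
    (simp_all add: bounded_clinear_funpow[OF A] adjoint_funpow[OF adjoint] funpow_adjoint_commute)

text \<open>On the range of \<open>P\<close>, the contour can be shrunk to radius \<open>r\<close>, where \<open>|z\<^sup>n - lam\<^sup>n| = O(r)\<close>.\<close>
lemma funpow_shiftop_power_riesz_proj_decay:
  assumes e: "e > 0"
  shows "\<exists>K. \<forall>k. norm ((shiftop (A ^^ n) (lam ^ n) ^^ k) (riesz_proj w)) \<le> e ^ k * K"
proof -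
  obtain C where C: "C \<ge> 0" "\<And>z. cmod (z - lam) \<le> 1 \<Longrightarrow> cmod (z ^ n - lam ^ n) \<le> C * cmod (z - lam)"
    using norm_power_diff_le by blast
  define r where "r = min (rho/2) (min 1 (e / (C + 1)))"
  have r: "0 < r" "r < rho" "r \<le> 1" using rho e C by (auto simp: r_def)
  have "C * r \<le> (C + 1) * (e / (C + 1))"
    using C(1) r by (intro mult_mono) (auto simp: r_def)
  then have Cr: "C * r \<le> e" using C(1) by simp
  obtain M where M: "M \<ge> 0" "\<And>z x. z \<in> sphere lam r \<Longrightarrow> norm (R z x) \<le> M * norm x"
    using resolvent_bounded_on_sphere[OF r(1,2)] by blast
  have "norm ((shiftop (A ^^ n) (lam ^ n) ^^ k) (riesz_proj w)) \<le> e ^ k * (r * (M * norm w))" for k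
  proof -
    have "norm ((shiftop (A ^^ n) (lam ^ n) ^^ k) (riesz_proj w))
        = norm (riesz_calculus r (\<lambda>z. (z ^ n - lam ^ n) ^ k) w)"
      by (simp add: funpow_shiftop_power_riesz_proj[OF r(1,2)])
    also have "\<dots> \<le> r * (e ^ k * (M * norm w))"
    proof (rule norm_riesz_calculus_le[OF r(1,2) _ _ M])
      show "continuous_on (sphere lam r) (\<lambda>z. (z ^ n - lam ^ n) ^ k)"
        by (intro continuous_intros)
      fix z assume "z \<in> sphere lam r"
      then have "cmod (z - lam) = r" by (simp add: dist_norm norm_minus_commute)
      then have "cmod (z ^ n - lam ^ n) \<le> e" using C(2)[of z] r(3) Cr by simp
      then show "cmod ((z ^ n - lam ^ n) ^ k) \<le> e ^ k"
        unfolding norm_power by (intro power_mono) auto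
    qed
    finally show ?thesis by (simp add: algebra_simps)
  qed
  then show ?thesis by blast
qed

lemma shiftop_power_riesz_proj_zero: "shiftop (A ^^ n) (lam ^ n) (riesz_proj w) = 0"
proof -
  define a where "a k = norm ((shiftop (A ^^ n) (lam ^ n) ^^ k) (riesz_proj w))" for k
  have "a 1 = 0"
  proof (rule log_convex_seq_fast_decay_imp_zero)
    show "(a (Suc k))\<^sup>2 \<le> a (Suc (Suc k)) * a k" for k
      unfolding a_def using norm_shiftop_power_square_le by simp
  qed (use funpow_shiftop_power_riesz_proj_decay in \<open>auto simp: a_def\<close>)
  then show ?thesis by (simp add: a_def)
qed

lemma riesz_calculus_power_diff_zero: "riesz_calculus (rho/2) (\<lambda>z. z ^ n - lam ^ n) w = 0"
  using shiftop_power_riesz_calculus[OF half_rho complex_polynomial_const, of n 1 w]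
  by (simp add: shiftop_power_riesz_proj_zero[unfolded riesz_proj_def])

lemma shiftop_riesz_proj_zero:
  assumes lam: "lam \<noteq> 0"
  shows "T (riesz_proj w) = 0"
proof -
  obtain v p where v: "complex_polynomial v" "v lam = 0" and p: "\<And>k. complex_polynomial (p k)"
    and factor: "\<And>k z. p k z * (z ^ n - lam ^ n) = (z - lam) * (1 - v z ^ k)"
    by (rule power_diff_geometric_factor[OF lam n_pos]) blast
  have power_diff: "complex_polynomial (\<lambda>z. z ^ n - lam ^ n)"
    by (intro complex_polynomial_diff complex_polynomial_power complex_polynomial_ident
        complex_polynomial_const)
  have "riesz_calculus (rho/2) (\<lambda>z. (z - lam) * (1 - v z ^ k)) w = 0" for k
    using riesz_calculus_polynomial_mult_zero[OF half_rho p power_diff riesz_calculus_power_diff_zero]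
    by (simp add: factor)
  moreover have "complex_polynomial (\<lambda>z. z - lam)"
    by (intro complex_polynomial_diff complex_polynomial_ident complex_polynomial_const)
  ultimately have "riesz_calculus (rho/2) (\<lambda>z. z - lam) w = 0"
    using riesz_calculus_zero_of_small_factor[OF _ v] by blast
  then show ?thesis using funpow_shiftop_riesz_proj[of 1 w] by simp
qed

lemma shiftop_nilpotent_on_riesz_range: "\<exists>m. \<forall>w. (T ^^ m) (riesz_proj w) = 0"
proof (cases "lam = 0")
  case True
  then have "(T ^^ n) (riesz_proj w) = 0" for w
    using funpow_shiftop_riesz_proj[of n w] riesz_calculus_power_diff_zero[of w]
    by (simp add: zero_power[OF n_pos])
  then show ?thesis by blast
next
  case False
  then show ?thesis using shiftop_riesz_proj_zero by (intro exI[of _ 1]) simp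
qed

end

lemma isolated_spectrum_punctured_resolvent:
  fixes A :: "'a::complex_hilbert_space \<Rightarrow> 'a"
  assumes A: "bounded_clinear A" and iso: "lam isolated_in spectrum A"
  obtains rho R where "punctured_resolvent A lam rho R"
proof -
  obtain U where U: "open U" "U \<inter> spectrum A = {lam}"
    using iso by (auto simp: isolated_in_def)
  then obtain rho where rho: "rho > 0" "ball lam rho \<subseteq> U"
    using openE by blast
  define R where
    "R z = (SOME B. bounded_clinear B \<and> (\<forall>x. B (shiftop A z x) = x) \<and> (\<forall>x. shiftop A z (B x) = x))"
    for z
  have "bounded_clinear (R z) \<and> (\<forall>x. R z (shiftop A z x) = x) \<and> (\<forall>x. shiftop A z (R z x) = x)"
    if "z \<in> ball lam rho - {lam}" for z
  proof -
    have "z \<notin> spectrum A" using that rho U(2) by auto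
    then have "\<exists>B. bounded_clinear B \<and> (\<forall>x. B (shiftop A z x) = x) \<and> (\<forall>x. shiftop A z (B x) = x)"
      by (simp add: spectrum_def)
    then show ?thesis unfolding R_def by (rule someI_ex)
  qed
  then have "punctured_resolvent A lam rho R"
    using A rho(1) by unfold_locales (auto simp: shiftop_def)
  then show ?thesis by (rule that)
qed

theorem theorem3p1:
  fixes A Astar :: "'a::complex_hilbert_space \<Rightarrow> 'a" and n :: nat
  assumes "infinite_dimensional TYPE('a)"
    and "n > 1"
    and "bounded_clinear A"
    and "\<forall>x y. cinner (A x) y = cinner x (Astar y)"
    and "Astar \<circ> (A ^^ n) = (A ^^ n) \<circ> Astar"
  shows "polaroid A"
  unfolding polaroid_def
proof (intro allI impI)
  fix mu assume iso: "mu isolated_in spectrum A"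
  obtain rho R where "punctured_resolvent A mu rho R"
    using isolated_spectrum_punctured_resolvent[OF assms(3) iso] .
  moreover have "n_normal_punctured_resolvent_axioms A Astar n"
    using assms(2,4) fun_cong[OF assms(5)] by unfold_locales auto
  ultimately interpret n_normal_punctured_resolvent A mu rho R Astar n
    by (rule n_normal_punctured_resolvent.intro)
  obtain m where "\<And>w. (shiftop A mu ^^ m) (riesz_proj w) = 0"
    using shiftop_nilpotent_on_riesz_range by blast
  then show "Defs.is_pole A mu"
    using iso pole_conditions_of_nilpotent[of m] unfolding Defs.is_pole_def isolated_in_def by blast
qed

end
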